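(* For every integer $n\geq 1$, $$\sum_{k=1}^{n-1}B_{2k}\bar B_{2n-2k}=\frac{1}{n+1}\sum_{k=1}^{n}B_{2k}B_{2n-2k}\,\frac{1-2^{2k-1}}{2^{2n-1}}\binom{2n+2}{2k+2}+(2n-1)\frac{B_{2n}}{2^{2n}}.$$
   Context: $B_n$ denotes the Bernoulli numbers, defined by $\frac{x}{e^x-1}=\sum_{n\ge 0}B_n\frac{x^n}{n!}$ (so $B_0=1$). $\bar B_n:=\frac{1-2^{n-1}}{2^{n-1}}B_n$. An empty sum equals $0$. *)

theory Defs
  imports "HOL-Computational_Algebra.Formal_Power_Series"
begin

text \<open>Division of formal power series (fps_X has subdegree 1, fps_exp 1 - 1 has subdegree 1)
  gives exactly the power series of x/(e^x-1).\<close>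

definition bernoulli_fps :: "real fps" where
  "bernoulli_fps = fps_X / (fps_exp 1 - 1)"

definition bernoulli :: "nat \<Rightarrow> real" where
  "bernoulli n = fact n * fps_nth bernoulli_fps n"

definition bernoulli_bar :: "nat \<Rightarrow> real" where
  "bernoulli_bar n = (1 - 2 ^ n / 2) / (2 ^ n / 2) * bernoulli n"

end

(*
  Write F_u = scaled_egf bernoulli u and G_u = scaled_egf bernoulli_bar u, i.e. the power series
  u x / (e^(u x) - 1) and u x e^(u x / 2) / (e^(u x) - 1) in x.  Clearing denominators gives, for
  u different from 0 and 1,
    F_u G_(1-u) + G_u F_(1-u) = 2 F_(1/2) ((1 - u) G_u + u G_(1-u)).
  The coefficient of x^N on either side is a polynomial in u; integrating it over [0, 1] with the
  Beta integral  int u^p (1 - u)^q du = p! q! / (p + q + 1)!  yields the convolution identity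
    sum_i B_i Bbar_(N-i) = 2 / (N + 2) * sum_i binom(N+2, i+2) 2^(i-N) Bbar_i B_(N-i).
  As G_u is even in u, Bbar_n vanishes for odd n; for N = 2n only even indices survive, and
  splitting off the terms with index 0 and 2n gives the theorem.
*)

theory Submission
  imports Defs "HOL-Analysis.Gamma_Function"
begin

definition scaled_egf :: "(nat \<Rightarrow> real) \<Rightarrow> real \<Rightarrow> real fps" where
  "scaled_egf a c = Abs_fps (\<lambda>n. a n * c ^ n / fact n)"

lemma scaled_egf_nth [simp]: "fps_nth (scaled_egf a c) n = a n * c ^ n / fact n"
  by (simp add: scaled_egf_def)

lemma scaled_egf_eq_compose: "scaled_egf a c = scaled_egf a 1 oo (fps_const c * fps_X)"
  by (simp add: fps_compose_linear fps_eq_iff)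

lemma scaled_egf_mult_nth:
  "fps_nth (scaled_egf a c * scaled_egf b d) N =
     (\<Sum>i=0..N. a i * b (N - i) / (fact i * fact (N - i)) * (c ^ i * d ^ (N - i)))"
  by (simp add: fps_mult_nth mult_ac)

lemma bernoulli_fps_eq_scaled_egf: "bernoulli_fps = scaled_egf bernoulli 1"
  by (simp add: fps_eq_iff bernoulli_def)

lemma fps_exp_minus_1_neq_0: "(c::real) \<noteq> 0 \<Longrightarrow> fps_exp c - 1 \<noteq> 0"
  by (metis fps_exp_eq_1_iff right_minus_eq)

lemma bernoulli_fps_mult_exp_minus_1: "bernoulli_fps * (fps_exp 1 - 1) = fps_X"
  unfolding bernoulli_fps_def
proof (rule fps_times_divide_eq)
  show "fps_exp (1::real) - 1 \<noteq> 0"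
    by (simp add: fps_exp_minus_1_neq_0)
  show "subdegree (fps_exp (1::real) - 1) \<le> subdegree (fps_X :: real fps)"
    by (rule subdegree_leI) simp
qed

lemma scaled_egf_bernoulli_mult_exp_minus_1:
  "scaled_egf bernoulli c * (fps_exp c - 1) = fps_const c * fps_X"
proof -
  have "(bernoulli_fps * (fps_exp 1 - 1)) oo (fps_const c * fps_X) = fps_X oo (fps_const c * fps_X)"
    by (simp only: bernoulli_fps_mult_exp_minus_1)
  then show ?thesis
    by (simp add: fps_compose_mult_distrib fps_compose_sub_distrib bernoulli_fps_eq_scaled_egf
        flip: scaled_egf_eq_compose)
qed

lemma bernoulli_bar_eq: "bernoulli_bar n = (2 / 2 ^ n - 1) * bernoulli n"
  unfolding bernoulli_bar_def by (simp add: field_simps)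

lemma scaled_egf_bernoulli_bar:
  "scaled_egf bernoulli_bar c = fps_const 2 * scaled_egf bernoulli (c / 2) - scaled_egf bernoulli c"
  by (rule fps_ext) (simp add: bernoulli_bar_eq field_simps power_divide)

lemma fps_exp_half_square: "fps_exp (c::real) = fps_exp (c / 2) * fps_exp (c / 2)"
  by (simp flip: fps_exp_add_mult)

lemma scaled_egf_bernoulli_bar_mult_exp_minus_1:
  "scaled_egf bernoulli_bar c * (fps_exp c - 1) = fps_const c * fps_X * fps_exp (c / 2)"
proof -
  have "scaled_egf bernoulli_bar c * (fps_exp c - 1)
      = fps_const 2 * (scaled_egf bernoulli (c / 2) * (fps_exp (c / 2) - 1)) * (fps_exp (c / 2) + 1)
        - scaled_egf bernoulli c * (fps_exp c - 1)"
    unfolding scaled_egf_bernoulli_bar fps_exp_half_square[of c] by (simp add: algebra_simps)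
  also have "\<dots> = fps_const c * fps_X * (fps_exp (c / 2) + 1) - fps_const c * fps_X"
    by (simp add: scaled_egf_bernoulli_mult_exp_minus_1 mult.assoc flip: mult.assoc[of "fps_const 2"])
  also have "\<dots> = fps_const c * fps_X * fps_exp (c / 2)"
    by (simp add: algebra_simps)
  finally show ?thesis .
qed

lemma scaled_egf_bernoulli_bar_minus_1: "scaled_egf bernoulli_bar (-1) = scaled_egf bernoulli_bar 1"
proof -
  have "fps_exp (1/2) * fps_exp (-1/2) = (1 :: real fps)"
    by (simp flip: fps_exp_add_mult)
  then have "scaled_egf bernoulli_bar (-1) * (fps_exp 1 - 1) = scaled_egf bernoulli_bar 1 * (fps_exp 1 - 1)"
    using scaled_egf_bernoulli_bar_mult_exp_minus_1[of 1] scaled_egf_bernoulli_bar_mult_exp_minus_1[of "-1"]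
      fps_exp_half_square[of 1] fps_exp_half_square[of "-1"]
    by (simp add: fps_const_neg[symmetric]) algebra
  then show ?thesis
    using fps_exp_minus_1_neq_0[of 1] by simp
qed

lemma bernoulli_bar_odd:
  assumes "odd n"
  shows "bernoulli_bar n = 0"
proof -
  have "fps_nth (scaled_egf bernoulli_bar (-1)) n = fps_nth (scaled_egf bernoulli_bar 1) n"
    by (simp only: scaled_egf_bernoulli_bar_minus_1)
  with assms show ?thesis
    by simp
qed

lemma bernoulli_0: "bernoulli 0 = 1"
proof -
  have "fps_nth (bernoulli_fps * (fps_exp 1 - 1)) 1 = 1"
    by (simp add: bernoulli_fps_mult_exp_minus_1)
  then show ?thesis
    by (simp add: fps_mult_nth bernoulli_def)
qed

lemma bernoulli_bar_0: "bernoulli_bar 0 = 1"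
  by (simp add: bernoulli_bar_eq bernoulli_0)

lemma scaled_egf_bernoulli_product_identity:
  assumes "u \<noteq> 0" "u \<noteq> 1"
  shows "scaled_egf bernoulli u * scaled_egf bernoulli_bar (1 - u)
           + scaled_egf bernoulli_bar u * scaled_egf bernoulli (1 - u)
         = fps_const (2 * (1 - u)) * (scaled_egf bernoulli_bar u * scaled_egf bernoulli (1/2))
           + fps_const (2 * u) * (scaled_egf bernoulli_bar (1 - u) * scaled_egf bernoulli (1/2))"
proof -
  define a where "a = fps_exp (u / 2)"
  define b where "b = fps_exp ((1 - u) / 2)"
  have "fps_exp (1/2) = a * b"
    unfolding a_def b_def by (simp add: add_divide_distrib[symmetric] flip: fps_exp_add_mult)
  moreover have "fps_const (2 * (1 - u)) = fps_const 2 * fps_const (1 - u)"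
    "fps_const (2 * u) = fps_const 2 * fps_const u" "fps_const 2 * fps_const (1/2) = (1 :: real fps)"
    by simp_all
  moreover have "fps_const (1 - u) = 1 - fps_const u"
    by (simp flip: fps_const_1_eq_1)
  ultimately have "(scaled_egf bernoulli u * scaled_egf bernoulli_bar (1 - u)
           + scaled_egf bernoulli_bar u * scaled_egf bernoulli (1 - u))
           * ((fps_exp u - 1) * (fps_exp (1 - u) - 1) * (fps_exp (1/2) - 1))
         = (fps_const (2 * (1 - u)) * (scaled_egf bernoulli_bar u * scaled_egf bernoulli (1/2))
           + fps_const (2 * u) * (scaled_egf bernoulli_bar (1 - u) * scaled_egf bernoulli (1/2)))
           * ((fps_exp u - 1) * (fps_exp (1 - u) - 1) * (fps_exp (1/2) - 1))"
    using scaled_egf_bernoulli_mult_exp_minus_1[of u] scaled_egf_bernoulli_mult_exp_minus_1[of "1 - u"]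
      scaled_egf_bernoulli_mult_exp_minus_1[of "1/2"]
      scaled_egf_bernoulli_bar_mult_exp_minus_1[of u, folded a_def]
      scaled_egf_bernoulli_bar_mult_exp_minus_1[of "1 - u", folded b_def]
      fps_exp_half_square[of u, folded a_def] fps_exp_half_square[of "1 - u", folded b_def]
    by algebra
  moreover have "(fps_exp u - 1) * (fps_exp (1 - u) - 1) * (fps_exp (1/2) - 1) \<noteq> (0 :: real fps)"
    using assms by (simp add: fps_exp_minus_1_neq_0)
  ultimately show ?thesis
    by (metis mult_right_cancel)
qed

lemma has_integral_power_mult_one_minus_power:
  "((\<lambda>u::real. u ^ p * (1 - u) ^ q) has_integral fact p * fact q / fact (p + q + 1)) {0..1}"
proof -
  have beta: "((\<lambda>u. u powr (1 + real p - 1) * (1 - u) powr (1 + real q - 1))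
                 has_integral Beta (1 + real p) (1 + real q)) {0..1}"
    by (rule has_integral_Beta_real) auto
  have "(1 + real p) + (1 + real q) = 1 + real (p + q + 1)"
    by simp
  then have Beta_fact: "Beta (1 + real p) (1 + real q) = fact p * fact q / fact (p + q + 1)"
    unfolding Beta_def by (simp only: Gamma_fact)
  show ?thesis
  proof (rule has_integral_spike_finite[OF _ _ beta[unfolded Beta_fact]])
    show "u ^ p * (1 - u) ^ q = u powr (1 + real p - 1) * (1 - u) powr (1 + real q - 1)"
      if "u \<in> {0..1} - {0, 1}" for u
      using that by (simp add: powr_realpow)
  qed simp
qed

lemma has_integral_scaled_egf_convolution:
  "((\<lambda>u. fps_nth (scaled_egf a u * scaled_egf b (1 - u)) N)
     has_integral (\<Sum>i=0..N. a i * b (N - i)) / fact (N + 1)) {0..1}"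
  unfolding scaled_egf_mult_nth sum_divide_distrib
proof (intro has_integral_sum)
  fix i assume "i \<in> {0..N}"
  then have "((\<lambda>u. a i * b (N - i) / (fact i * fact (N - i)) * (u ^ i * (1 - u) ^ (N - i)))
      has_integral a i * b (N - i) / (fact i * fact (N - i)) * (fact i * fact (N - i) / fact (N + 1))) {0..1}"
    using has_integral_power_mult_one_minus_power[of i "N - i"] by (intro has_integral_mult_right) simp
  then show "((\<lambda>u. a i * b (N - i) / (fact i * fact (N - i)) * (u ^ i * (1 - u) ^ (N - i)))
      has_integral a i * b (N - i) / fact (N + 1)) {0..1}"
    by simp
qed simp

lemma has_integral_one_minus_times_scaled_egf_mult_nth:
  "((\<lambda>u. (1 - u) * fps_nth (scaled_egf a u * scaled_egf b c) N)
     has_integral (\<Sum>i=0..N. a i * b (N - i) * c ^ (N - i) / (fact (i + 2) * fact (N - i)))) {0..1}"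
  unfolding scaled_egf_mult_nth sum_distrib_left
proof (intro has_integral_sum)
  fix i
  have "((\<lambda>u. a i * b (N - i) * c ^ (N - i) / (fact i * fact (N - i)) * (u ^ i * (1 - u) ^ 1))
      has_integral a i * b (N - i) * c ^ (N - i) / (fact i * fact (N - i)) * (fact i * fact 1 / fact (i + 1 + 1))) {0..1}"
    by (intro has_integral_mult_right has_integral_power_mult_one_minus_power)
  then show "((\<lambda>u. (1 - u) * (a i * b (N - i) / (fact i * fact (N - i)) * (u ^ i * c ^ (N - i))))
      has_integral a i * b (N - i) * c ^ (N - i) / (fact (i + 2) * fact (N - i))) {0..1}"
    by (simp add: field_simps)
qed simp

lemma has_integral_times_scaled_egf_one_minus_mult_nth:
  "((\<lambda>u. u * fps_nth (scaled_egf a (1 - u) * scaled_egf b c) N)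
     has_integral (\<Sum>i=0..N. a i * b (N - i) * c ^ (N - i) / (fact (i + 2) * fact (N - i)))) {0..1}"
  unfolding scaled_egf_mult_nth sum_distrib_left
proof (intro has_integral_sum)
  fix i
  have "((\<lambda>u. a i * b (N - i) * c ^ (N - i) / (fact i * fact (N - i)) * (u ^ 1 * (1 - u) ^ i))
      has_integral a i * b (N - i) * c ^ (N - i) / (fact i * fact (N - i)) * (fact 1 * fact i / fact (1 + i + 1))) {0..1}"
    by (intro has_integral_mult_right has_integral_power_mult_one_minus_power)
  then show "((\<lambda>u. u * (a i * b (N - i) / (fact i * fact (N - i)) * ((1 - u) ^ i * c ^ (N - i))))
      has_integral a i * b (N - i) * c ^ (N - i) / (fact (i + 2) * fact (N - i))) {0..1}"
    by (simp add: field_simps)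
qed simp

lemma bernoulli_bernoulli_bar_convolution_fact:
  "(\<Sum>i=0..N. bernoulli i * bernoulli_bar (N - i)) =
     2 * fact (N + 1) * (\<Sum>i=0..N. bernoulli_bar i * bernoulli (N - i) * (1/2) ^ (N - i)
                                    / (fact (i + 2) * fact (N - i)))"
  (is "?S = 2 * fact (N + 1) * ?R")
proof -
  define lhs where "lhs u = scaled_egf bernoulli u * scaled_egf bernoulli_bar (1 - u)
                              + scaled_egf bernoulli_bar u * scaled_egf bernoulli (1 - u)" for u
  define rhs where "rhs u = fps_const (2 * (1 - u)) * (scaled_egf bernoulli_bar u * scaled_egf bernoulli (1/2))
           + fps_const (2 * u) * (scaled_egf bernoulli_bar (1 - u) * scaled_egf bernoulli (1/2))" for u
  have S_rev: "(\<Sum>i=0..N. bernoulli_bar i * bernoulli (N - i)) = ?S"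
    by (subst sum.atLeastAtMost_rev) (auto intro: sum.cong)
  have lhs_integral: "((\<lambda>u. fps_nth (lhs u) N) has_integral ?S / fact (N + 1) + ?S / fact (N + 1)) {0..1}"
    using has_integral_add[OF has_integral_scaled_egf_convolution[of bernoulli bernoulli_bar N]
        has_integral_scaled_egf_convolution[of bernoulli_bar bernoulli N]]
    unfolding lhs_def fps_add_nth S_rev .
  have "fps_nth (lhs u) N = fps_nth (rhs u) N" if "u \<in> {0..1} - {0, 1}" for u
    using that scaled_egf_bernoulli_product_identity[of u] by (simp add: lhs_def rhs_def)
  then have "((\<lambda>u. fps_nth (rhs u) N) has_integral ?S / fact (N + 1) + ?S / fact (N + 1)) {0..1}"
    by (intro has_integral_spike_finite[OF _ _ lhs_integral, of "{0, 1}"]) simp_all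
  moreover have "((\<lambda>u. fps_nth (rhs u) N) has_integral 2 * ?R + 2 * ?R) {0..1}"
    unfolding rhs_def fps_add_nth fps_mult_left_const_nth mult.assoc[of 2]
    by (intro has_integral_add has_integral_mult_right has_integral_one_minus_times_scaled_egf_mult_nth
        has_integral_times_scaled_egf_one_minus_mult_nth)
  ultimately have "?S / fact (N + 1) + ?S / fact (N + 1) = 2 * ?R + 2 * ?R"
    by (rule has_integral_unique)
  moreover have "fact (N + 1) \<noteq> (0::real)"
    by simp
  ultimately show ?thesis
    by (simp add: field_simps del: fact_Suc)
qed

lemma bernoulli_bernoulli_bar_convolution:
  "(\<Sum>i=0..N. bernoulli i * bernoulli_bar (N - i)) =
     2 / (real N + 2) * (\<Sum>i=0..N. real ((N + 2) choose (i + 2)) * 2 ^ i / 2 ^ N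
                                * bernoulli_bar i * bernoulli (N - i))"
  unfolding bernoulli_bernoulli_bar_convolution_fact sum_distrib_left
proof (intro sum.cong refl)
  fix i assume "i \<in> {0..N}"
  then have binomial: "real ((N + 2) choose (i + 2)) = fact (N + 2) / (fact (i + 2) * fact (N - i))"
    and power: "(2::real) ^ N = 2 ^ i * 2 ^ (N - i)"
    by (subst binomial_fact, simp_all flip: power_add)
  have factorial: "fact (N + 2) = (real N + 2) * (fact (N + 1) :: real)"
    using fact_Suc[of "N + 1"] by simp
  have rearrange: "2 * F * (a * b * (1 / q) / (G * H)) = 2 / m * (m * F / (G * H) * p / (p * q) * a * b)"
    if "m \<noteq> 0" "G \<noteq> 0" "H \<noteq> 0" "p \<noteq> 0" "q \<noteq> 0" for F G H a b m p q :: real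
    using that by (simp add: field_simps)
  show "2 * fact (N + 1) * (bernoulli_bar i * bernoulli (N - i) * (1/2) ^ (N - i)
               / (fact (i + 2) * fact (N - i)))
      = 2 / (real N + 2) * (real ((N + 2) choose (i + 2)) * 2 ^ i / 2 ^ N
               * bernoulli_bar i * bernoulli (N - i))"
    unfolding binomial power factorial power_one_over by (rule rearrange) simp_all
qed

lemma sum_atLeast0_atMost_double_even:
  fixes f :: "nat \<Rightarrow> 'a::comm_monoid_add"
  assumes "\<And>i. i \<le> 2 * n \<Longrightarrow> odd i \<Longrightarrow> f i = 0"
  shows "(\<Sum>i=0..2 * n. f i) = (\<Sum>k=0..n. f (2 * k))"
proof -
  have "(\<Sum>k=0..n. f (2 * k)) = (\<Sum>i\<in>(\<lambda>k. 2 * k) ` {0..n}. f i)"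
    by (simp add: sum.reindex inj_on_def)
  also have "\<dots> = (\<Sum>i=0..2 * n. f i)"
  proof (rule sum.mono_neutral_left)
    show "\<forall>i\<in>{0..2 * n} - (\<lambda>k. 2 * k) ` {0..n}. f i = 0"
    proof
      fix i assume i: "i \<in> {0..2 * n} - (\<lambda>k. 2 * k) ` {0..n}"
      then have "odd i"
        by (auto intro!: image_eqI[of _ _ "i div 2"])
      with i show "f i = 0"
        by (simp add: assms)
    qed
  qed auto
  finally show ?thesis ..
qed

lemma sum_bernoulli_mult_bernoulli_bar_double:
  assumes "n \<ge> 1"
  shows "(\<Sum>i=0..2 * n. bernoulli i * bernoulli_bar (2 * n - i))
       = (\<Sum>k=1..n - 1. bernoulli (2 * k) * bernoulli_bar (2 * n - 2 * k)) + 2 * bernoulli (2 * n) / 2 ^ (2 * n)"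
proof -
  obtain m where n: "n = Suc m"
    using assms by (cases n) auto
  have "(\<Sum>i=0..2 * n. bernoulli i * bernoulli_bar (2 * n - i))
      = (\<Sum>k=0..n. bernoulli (2 * k) * bernoulli_bar (2 * n - 2 * k))"
    by (rule sum_atLeast0_atMost_double_even) (simp add: bernoulli_bar_odd)
  also have "\<dots> = bernoulli_bar (2 * n) + (\<Sum>k=1..n - 1. bernoulli (2 * k) * bernoulli_bar (2 * n - 2 * k))
                  + bernoulli (2 * n)"
    unfolding n by (simp add: sum.atLeast_Suc_atMost sum.atLeast0_atMost_Suc bernoulli_0 bernoulli_bar_0)
  finally show ?thesis
    by (simp add: bernoulli_bar_eq algebra_simps)
qed

lemma sum_binomial_bernoulli_bar_mult_bernoulli_double:
  "(\<Sum>i=0..2 * n. real ((2 * n + 2) choose (i + 2)) * 2 ^ i / 2 ^ (2 * n) * bernoulli_bar i * bernoulli (2 * n - i))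
     = (\<Sum>k=1..n. bernoulli (2 * k) * bernoulli (2 * n - 2 * k)
                   * ((1 - 2 ^ (2 * k - 1)) / 2 ^ (2 * n - 1)) * real ((2 * n + 2) choose (2 * k + 2)))
       + (real n + 1) * (2 * real n + 1) * bernoulli (2 * n) / 2 ^ (2 * n)"
proof -
  have "(\<Sum>i=0..2 * n. real ((2 * n + 2) choose (i + 2)) * 2 ^ i / 2 ^ (2 * n) * bernoulli_bar i * bernoulli (2 * n - i))
      = (\<Sum>k=0..n. real ((2 * n + 2) choose (2 * k + 2)) * 2 ^ (2 * k) / 2 ^ (2 * n)
                    * bernoulli_bar (2 * k) * bernoulli (2 * n - 2 * k))"
    by (rule sum_atLeast0_atMost_double_even) (simp add: bernoulli_bar_odd)
  also have "\<dots> = (real n + 1) * (2 * real n + 1) * bernoulli (2 * n) / 2 ^ (2 * n)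
      + (\<Sum>k=1..n. real ((2 * n + 2) choose (2 * k + 2)) * 2 ^ (2 * k) / 2 ^ (2 * n)
                    * bernoulli_bar (2 * k) * bernoulli (2 * n - 2 * k))"
  proof -
    have "real ((2 * n + 2) choose 2) = (real n + 1) * (2 * real n + 1)"
      by (simp add: choose_two algebra_simps)
    then show ?thesis
      by (simp add: sum.atLeast_Suc_atMost bernoulli_bar_0 numeral_2_eq_2 del: binomial_Suc_Suc)
  qed
  also have "(\<Sum>k=1..n. real ((2 * n + 2) choose (2 * k + 2)) * 2 ^ (2 * k) / 2 ^ (2 * n)
                    * bernoulli_bar (2 * k) * bernoulli (2 * n - 2 * k))
      = (\<Sum>k=1..n. bernoulli (2 * k) * bernoulli (2 * n - 2 * k)
                   * ((1 - 2 ^ (2 * k - 1)) / 2 ^ (2 * n - 1)) * real ((2 * n + 2) choose (2 * k + 2)))"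
  proof (rule sum.cong)
    fix k assume "k \<in> {1..n}"
    then have "(2::real) ^ (2 * k) = 2 * 2 ^ (2 * k - 1)" "(2::real) ^ (2 * n) = 2 * 2 ^ (2 * n - 1)"
      by (simp_all flip: power_Suc)
    then show "real ((2 * n + 2) choose (2 * k + 2)) * 2 ^ (2 * k) / 2 ^ (2 * n)
                    * bernoulli_bar (2 * k) * bernoulli (2 * n - 2 * k)
        = bernoulli (2 * k) * bernoulli (2 * n - 2 * k)
                   * ((1 - 2 ^ (2 * k - 1)) / 2 ^ (2 * n - 1)) * real ((2 * n + 2) choose (2 * k + 2))"
      by (simp add: bernoulli_bar_eq field_simps del: binomial_Suc_Suc)
  qed simp
  finally show ?thesis
    by simp
qed

theorem mainTheorem10:
  fixes n :: nat
  assumes "n \<ge> 1"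
  shows "(\<Sum>k=1..n-1. bernoulli (2*k) * bernoulli_bar (2*n - 2*k)) =
         1 / (real n + 1) * (\<Sum>k=1..n. bernoulli (2*k) * bernoulli (2*n - 2*k)
              * ((1 - 2 ^ (2*k - 1)) / 2 ^ (2*n - 1)) * real ((2*n + 2) choose (2*k + 2)))
         + (2 * real n - 1) * bernoulli (2*n) / 2 ^ (2*n)"
proof -
  define X where "X = (\<Sum>k=1..n-1. bernoulli (2*k) * bernoulli_bar (2*n - 2*k))"
  define Y where "Y = (\<Sum>k=1..n. bernoulli (2*k) * bernoulli (2*n - 2*k)
              * ((1 - 2 ^ (2*k - 1)) / 2 ^ (2*n - 1)) * real ((2*n + 2) choose (2*k + 2)))"
  have "2 / (real (2 * n) + 2) = 1 / (real n + 1)"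
    by (simp add: field_simps)
  then have "X = 1 / (real n + 1) * (Y + (real n + 1) * (2 * real n + 1) * bernoulli (2 * n) / 2 ^ (2 * n))
                 - 2 * bernoulli (2 * n) / 2 ^ (2 * n)"
    using bernoulli_bernoulli_bar_convolution[of "2 * n"]
    unfolding X_def Y_def sum_bernoulli_mult_bernoulli_bar_double[OF assms]
      sum_binomial_bernoulli_bar_mult_bernoulli_double by simp
  also have "\<dots> = 1 / (real n + 1) * Y + (2 * real n - 1) * bernoulli (2 * n) / 2 ^ (2 * n)"
  proof -
    have "1 / (m + 1) * (y + (m + 1) * (2 * m + 1) * c) - 2 * c = 1 / (m + 1) * y + (2 * m - 1) * c"
      if "m \<ge> 0" for m y c :: real
      using that by (simp add: field_simps)
    from this[of "real n" Y "bernoulli (2 * n) / 2 ^ (2 * n)"] show ?thesis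
      unfolding times_divide_eq_right by simp
  qed
  finally show ?thesis
    unfolding X_def Y_def .
qed

end
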